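(* Let $X$ be a nonempty set and let $G$ be a permutation group on $X$ which separates $X$. Then $G$ does not satisfy any group law; that is, for every $k\ge 1$ and every nontrivial element $w\ne 1$ of the free group $F_k$ on generators $f_1,\dots,f_k$, there exist $g_1,\dots,g_k\in G$ with $w(g_1,\dots,g_k)\neq 1$.
   Context: A permutation group $G$ on a set $X$ separates $X$ if for every finite subset $Y\subseteq X$, the pointwise stabilizer $G_Y=\{g\in G: y^g=y \text{ for all } y\in Y\}$ fixes no point of $X\setminus Y$. For $w\in F_k$ and $g_1,\dots,g_k\in G$, $w(g_1,\dots,g_k)$ denotes the element of $G$ obtained by substituting $f_i=g_i$. A group satisfies the group law $w$ if $w(g_1,\dots,g_k)=1$ for all $g_i\in G$. *)

theory Defs
  imports "HOL-Algebra.Bij"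
begin

text \<open>Elements of the free group F_k on generators f_0,...,f_(k-1) are represented
  by reduced words: lists of letters (b, i) with i < k, where (True, i) stands for f_i
  and (False, i) for its inverse, and no letter is adjacent to its inverse.\<close>

definition letter_inverse :: "bool \<times> nat \<Rightarrow> bool \<times> nat" where
  "letter_inverse l = (\<not> fst l, snd l)"

fun reduced_word :: "(bool \<times> nat) list \<Rightarrow> bool" where
  "reduced_word [] = True"
| "reduced_word [l] = True"
| "reduced_word (l1 # l2 # w) = (l2 \<noteq> letter_inverse l1 \<and> reduced_word (l2 # w))"

definition free_group_elem :: "nat \<Rightarrow> (bool \<times> nat) list \<Rightarrow> bool" where
  "free_group_elem k w \<longleftrightarrow> reduced_word w \<and> (\<forall>l \<in> set w. snd l < k)"

fun word_eval :: "('g, 'b) monoid_scheme \<Rightarrow> (nat \<Rightarrow> 'g) \<Rightarrow> (bool \<times> nat) list \<Rightarrow> 'g" where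
  "word_eval H g [] = \<one>\<^bsub>H\<^esub>"
| "word_eval H g (l # w) =
     (if fst l then g (snd l) else inv\<^bsub>H\<^esub> (g (snd l))) \<otimes>\<^bsub>H\<^esub> word_eval H g w"

definition perm_group_on :: "'a set \<Rightarrow> ('a \<Rightarrow> 'a) set \<Rightarrow> bool" where
  "perm_group_on X G \<longleftrightarrow> subgroup G (BijGroup X)"

definition separates :: "('a \<Rightarrow> 'a) set \<Rightarrow> 'a set \<Rightarrow> bool" where
  "separates G X \<longleftrightarrow>
     (\<forall>Y. finite Y \<and> Y \<subseteq> X \<longrightarrow>
        (\<forall>x \<in> X - Y. \<not> (\<forall>g \<in> {g \<in> G. \<forall>y \<in> Y. g y = y}. g x = x)))"

end

theory Submission
  imports Defs "HOL-Library.Sublist"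
begin

text \<open>Fix a point x. For a reduced word w = l_1 ... l_n, a choice of generators in G determines
  the path x, l_n x, l_(n-1) l_n x, ..., w x. By induction on n we choose the generators so that
  this path has no repeated point; then w x \<noteq> x. For the inductive step, let c be the point
  to which l_1 sends the end of the path for l_2 ... l_n. Separation yields h \<in> G fixing every
  other point of that path while moving c off it. Replacing the generator g_i of l_1 by h g_i or
  g_i h\<inverse> (depending on the sign of l_1) leaves the old path unchanged, because reducedness
  prevents l_1\<inverse> from being the first letter of l_2 ... l_n, and extends it by the new
  point h c.\<close>

lemma Bij_apply_closed: "f \<in> Bij X \<Longrightarrow> x \<in> X \<Longrightarrow> f x \<in> X"
  using Bij_imp_funcset by blast

lemma Bij_apply_eq_iff: "f \<in> Bij X \<Longrightarrow> x \<in> X \<Longrightarrow> y \<in> X \<Longrightarrow> f x = f y \<longleftrightarrow> x = y"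
  by (auto simp: Bij_def bij_betw_def inj_on_eq_iff)

lemma BijGroup_mult_apply:
  "f \<in> Bij X \<Longrightarrow> g \<in> Bij X \<Longrightarrow> x \<in> X \<Longrightarrow> (f \<otimes>\<^bsub>BijGroup X\<^esub> g) x = f (g x)"
  by (simp add: BijGroup_def compose_def)

lemma BijGroup_one_apply: "x \<in> X \<Longrightarrow> \<one>\<^bsub>BijGroup X\<^esub> x = x"
  by (simp add: BijGroup_def)

lemma BijGroup_inv_apply_eq_iff:
  assumes "f \<in> Bij X" "x \<in> X" "y \<in> X"
  shows "(inv\<^bsub>BijGroup X\<^esub> f) y = x \<longleftrightarrow> f x = y"
  using assms
  by (auto simp: inv_BijGroup Bij_def bij_betw_inv_into_left bij_betw_inv_into_right)

lemma carrier_BijGroup: "carrier (BijGroup X) = Bij X"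
  by (simp add: BijGroup_def)


definition letter_eval :: "('g, 'b) monoid_scheme \<Rightarrow> (nat \<Rightarrow> 'g) \<Rightarrow> bool \<times> nat \<Rightarrow> 'g" where
  "letter_eval H g l = (if fst l then g (snd l) else inv\<^bsub>H\<^esub> (g (snd l)))"

lemma word_eval_Cons: "word_eval H g (l # w) = letter_eval H g l \<otimes>\<^bsub>H\<^esub> word_eval H g w"
  by (simp add: letter_eval_def)

lemma (in group) letter_eval_closed: "range g \<subseteq> carrier G \<Longrightarrow> letter_eval G g l \<in> carrier G"
  by (auto simp: letter_eval_def)

lemma (in group) word_eval_closed: "range g \<subseteq> carrier G \<Longrightarrow> word_eval G g w \<in> carrier G"
  by (induction w) (auto simp: word_eval_Cons letter_eval_closed)

lemma (in group) letter_eval_letter_inverse: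
  "g (snd l) \<in> carrier G \<Longrightarrow> letter_eval G g (letter_inverse l) = inv (letter_eval G g l)"
  by (simp add: letter_eval_def letter_inverse_def)

lemma letter_eq_or_inverse: "snd m = snd l \<Longrightarrow> m = l \<or> m = letter_inverse l"
  by (cases m; cases l) (auto simp: letter_inverse_def)

definition twist_generator ::
    "('g, 'b) monoid_scheme \<Rightarrow> (nat \<Rightarrow> 'g) \<Rightarrow> bool \<times> nat \<Rightarrow> 'g \<Rightarrow> nat \<Rightarrow> 'g" where
  "twist_generator H g l h =
     g(snd l := if fst l then h \<otimes>\<^bsub>H\<^esub> g (snd l) else g (snd l) \<otimes>\<^bsub>H\<^esub> inv\<^bsub>H\<^esub> h)"

lemma (in group) letter_eval_twist_generator:
  assumes "g (snd l) \<in> carrier G" "h \<in> carrier G"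
  shows "letter_eval G (twist_generator G g l h) l = h \<otimes> letter_eval G g l"
  using assms by (simp add: letter_eval_def twist_generator_def inv_mult_group)

lemma (in group) letter_eval_twist_generator_inverse:
  assumes "g (snd l) \<in> carrier G" "h \<in> carrier G"
  shows "letter_eval G (twist_generator G g l h) (letter_inverse l)
           = letter_eval G g (letter_inverse l) \<otimes> inv h"
  using assms by (simp add: letter_eval_def twist_generator_def letter_inverse_def inv_mult_group)

lemma letter_eval_twist_generator_other:
  "snd m \<noteq> snd l \<Longrightarrow> letter_eval H (twist_generator H g l h) m = letter_eval H g m"
  by (simp add: letter_eval_def twist_generator_def)

lemma twist_generator_in_subgroup:
  assumes "subgroup S H" "range g \<subseteq> S" "h \<in> S"
  shows "range (twist_generator H g l h) \<subseteq> S"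
  using assms subgroup.m_closed[OF assms(1)] subgroup.m_inv_closed[OF assms(1)]
  by (auto simp: twist_generator_def)


fun word_path :: "'a set \<Rightarrow> (nat \<Rightarrow> 'a \<Rightarrow> 'a) \<Rightarrow> (bool \<times> nat) list \<Rightarrow> 'a \<Rightarrow> 'a list" where
  "word_path X g [] x = [x]"
| "word_path X g (l # w) x =
     letter_eval (BijGroup X) g l (hd (word_path X g w x)) # word_path X g w x"

lemma word_path_not_Nil [simp]: "word_path X g w x \<noteq> []"
  by (cases w) auto

lemma length_word_path [simp]: "length (word_path X g w x) = Suc (length w)"
  by (induction w) auto

lemma last_word_path [simp]: "last (word_path X g w x) = x"
  by (induction w) auto

lemma letter_eval_BijGroup_closed:
  "range g \<subseteq> Bij X \<Longrightarrow> letter_eval (BijGroup X) g l \<in> Bij X"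
  using group.letter_eval_closed[OF group_BijGroup] by (metis carrier_BijGroup)

lemma word_eval_BijGroup_closed:
  "range g \<subseteq> Bij X \<Longrightarrow> word_eval (BijGroup X) g w \<in> Bij X"
  using group.word_eval_closed[OF group_BijGroup] by (metis carrier_BijGroup)

lemma word_path_subset:
  assumes "range g \<subseteq> Bij X" "x \<in> X"
  shows "set (word_path X g w x) \<subseteq> X"
proof (induction w)
  case (Cons l w)
  have "hd (word_path X g w x) \<in> X"
    using Cons.IH by (metis hd_in_set subsetD word_path_not_Nil)
  then show ?case
    using Cons.IH Bij_apply_closed[OF letter_eval_BijGroup_closed[OF assms(1)]] by simp
qed (simp add: assms(2))

lemma word_eval_apply:
  assumes "range g \<subseteq> Bij X" "x \<in> X"
  shows "word_eval (BijGroup X) g w x = hd (word_path X g w x)"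
proof (induction w)
  case Nil
  then show ?case using assms(2) by (simp add: BijGroup_one_apply)
next
  case (Cons l w)
  have "word_eval (BijGroup X) g (l # w) x
      = letter_eval (BijGroup X) g l (word_eval (BijGroup X) g w x)"
    unfolding word_eval_Cons using assms
    by (intro BijGroup_mult_apply letter_eval_BijGroup_closed word_eval_BijGroup_closed)
  then show ?case
    using Cons by simp
qed

lemma suffix_word_path: "suffix v w \<Longrightarrow> suffix (word_path X g v x) (word_path X g w x)"
proof (induction w)
  case (Cons l w)
  then show ?case
    by (metis suffix_Cons suffix_ConsI word_path.simps(2))
qed simp

lemma distinct_word_path_suffix:
  assumes "distinct (word_path X g w x)" "suffix v w"
    and "hd (word_path X g w x) \<in> set (word_path X g v x)"
  shows "v = w"
proof -
  obtain P where P: "word_path X g w x = P @ word_path X g v x"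
    using suffix_word_path[OF assms(2), of X g x] unfolding suffix_def by blast
  have "P = []"
  proof (rule ccontr)
    assume "P \<noteq> []"
    then have "hd (word_path X g w x) \<in> set P" by (simp add: P)
    then show False using assms(1,3) P by auto
  qed
  then have "length v = length w"
    using P by (metis append_Nil length_word_path nat.inject)
  then show ?thesis
    using assms(2) by (auto elim: suffixE)
qed

lemma word_path_cong:
  assumes "\<And>m v. suffix (m # v) w \<Longrightarrow>
     letter_eval (BijGroup X) g' m (hd (word_path X g v x))
       = letter_eval (BijGroup X) g m (hd (word_path X g v x))"
  shows "word_path X g' w x = word_path X g w x"
  using assms
proof (induction w)
  case (Cons l w)
  have "word_path X g' w x = word_path X g w x"
    using Cons by (meson suffix_ConsI)
  then show ?case
    using Cons.prems[of l w] by simp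
qed simp

lemma separates_escape:
  assumes G: "subgroup G (BijGroup X)" and sep: "separates G X"
    and T: "finite T" "T \<subseteq> X" and c: "c \<in> X"
  obtains h where "h \<in> G" "\<forall>t \<in> T - {c}. h t = t" "h c \<notin> T"
proof (cases "c \<in> T")
  case False
  then show ?thesis
    using that[of "\<one>\<^bsub>BijGroup X\<^esub>"] subgroup.one_closed[OF G] T(2) c
    by (auto simp: BijGroup_one_apply subset_iff)
next
  case True
  have "finite (T - {c})" "T - {c} \<subseteq> X" "c \<in> X - (T - {c})"
    using T c by auto
  then obtain h where h: "h \<in> G" "\<forall>t \<in> T - {c}. h t = t" "h c \<noteq> c"
    using sep unfolding separates_def by blast
  have hB: "h \<in> Bij X"
    using subgroup.subset[OF G] h(1) by (auto simp: carrier_BijGroup)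
  have "h c \<notin> T"
  proof
    assume "h c \<in> T"
    then have "h (h c) = h c" using h(2,3) by blast
    then show False
      using h(3) Bij_apply_eq_iff[OF hB] Bij_apply_closed[OF hB c] c by blast
  qed
  then show ?thesis using that h(1,2) by blast
qed

lemma hd_word_path_suffix_in_set:
  "suffix v w \<Longrightarrow> hd (word_path X g v x) \<in> set (word_path X g w x)"
  by (metis hd_in_set set_mono_suffix subsetD suffix_word_path word_path_not_Nil)

lemma hd_word_path_strict_suffix_neq:
  assumes "distinct (word_path X g w x)" "suffix (m # v) w"
  shows "hd (word_path X g v x) \<noteq> hd (word_path X g w x)"
proof
  assume "hd (word_path X g v x) = hd (word_path X g w x)"
  then have "v = w"
    using distinct_word_path_suffix[OF assms(1) suffix_ConsD[OF assms(2)]]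
    by (metis hd_in_set word_path_not_Nil)
  then show False
    using assms(2) by (auto elim: suffixE)
qed

lemma letter_eval_twist_generator_apply:
  assumes g: "range g \<subseteq> Bij X" and h: "h \<in> Bij X" and y: "y \<in> X"
  shows "letter_eval (BijGroup X) (twist_generator (BijGroup X) g l h) l y
       = h (letter_eval (BijGroup X) g l y)"
proof -
  have "g (snd l) \<in> carrier (BijGroup X)" "h \<in> carrier (BijGroup X)"
    using g h by (auto simp: carrier_BijGroup)
  then show ?thesis
    using group.letter_eval_twist_generator[of "BijGroup X" g l h, OF group_BijGroup]
      BijGroup_mult_apply[OF h letter_eval_BijGroup_closed[OF g] y] by simp
qed

lemma letter_eval_twist_generator_inverse_apply:
  assumes g: "range g \<subseteq> Bij X" and h: "h \<in> Bij X" and y: "y \<in> X"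
  shows "letter_eval (BijGroup X) (twist_generator (BijGroup X) g l h) (letter_inverse l) y
       = letter_eval (BijGroup X) g (letter_inverse l) ((inv\<^bsub>BijGroup X\<^esub> h) y)"
proof -
  have "g (snd l) \<in> carrier (BijGroup X)" "h \<in> carrier (BijGroup X)"
    using g h by (auto simp: carrier_BijGroup)
  moreover have "inv\<^bsub>BijGroup X\<^esub> h \<in> Bij X"
    using group.inv_closed[OF group_BijGroup] h by (metis carrier_BijGroup)
  ultimately show ?thesis
    using group.letter_eval_twist_generator_inverse[of "BijGroup X" g l h, OF group_BijGroup]
      BijGroup_mult_apply[OF letter_eval_BijGroup_closed[OF g] _ y] by simp
qed

lemma word_path_steps_avoid:
  assumes g: "range g \<subseteq> Bij X" and x: "x \<in> X"
    and reduced: "reduced_word (l # w)"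
    and distinct: "distinct (word_path X g w x)"
    and mv: "suffix (m # v) w"
  shows "m = l \<Longrightarrow>
      letter_eval (BijGroup X) g m (hd (word_path X g v x)) \<noteq> hd (word_path X g (l # w) x)"
    and "m = letter_inverse l \<Longrightarrow> hd (word_path X g v x) \<noteq> hd (word_path X g (l # w) x)"
proof -
  define y where "y = hd (word_path X g v x)"
  define z where "z = hd (word_path X g w x)"
  define a where "a = letter_eval (BijGroup X) g l"
  have aB: "a \<in> Bij X"
    using letter_eval_BijGroup_closed[OF g] by (simp add: a_def)
  have yX: "y \<in> X" and zX: "z \<in> X"
    using word_path_subset[OF g x] hd_word_path_suffix_in_set[OF suffix_ConsD[OF mv]]
    unfolding y_def z_def by (metis hd_in_set subsetD word_path_not_Nil)+
  show "letter_eval (BijGroup X) g m y \<noteq> hd (word_path X g (l # w) x)" if "m = l"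
    using that hd_word_path_strict_suffix_neq[OF distinct mv] Bij_apply_eq_iff[OF aB yX zX]
    by (simp add: a_def y_def z_def)
  show "y \<noteq> hd (word_path X g (l # w) x)" if m: "m = letter_inverse l"
  proof
    assume "y = hd (word_path X g (l # w) x)"
    then have "y = a z"
      by (simp add: a_def z_def)
    moreover have "letter_eval (BijGroup X) g m = inv\<^bsub>BijGroup X\<^esub> a"
      using m g group.letter_eval_letter_inverse[of "BijGroup X" g l, OF group_BijGroup]
      by (auto simp: a_def carrier_BijGroup)
    ultimately have "hd (word_path X g (m # v) x) = z"
      using BijGroup_inv_apply_eq_iff[OF aB zX yX] by (simp add: y_def)
    then have "m # v = w"
      using distinct_word_path_suffix[OF distinct mv] by (simp add: z_def)
    then show False
      using reduced m by auto
  qed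
qed

lemma word_path_twist_generator:
  assumes g: "range g \<subseteq> Bij X" and h: "h \<in> Bij X" and x: "x \<in> X"
    and reduced: "reduced_word (l # w)"
    and distinct: "distinct (word_path X g w x)"
    and fixes_path: "\<forall>t \<in> set (word_path X g w x). t \<noteq> hd (word_path X g (l # w) x) \<longrightarrow> h t = t"
  shows "word_path X (twist_generator (BijGroup X) g l h) w x = word_path X g w x"
proof (rule word_path_cong)
  fix m v
  assume mv: "suffix (m # v) w"
  note avoid = word_path_steps_avoid[OF g x reduced distinct mv]
  define y where "y = hd (word_path X g v x)"
  have y_on_path: "y \<in> set (word_path X g w x)"
    and my_on_path: "letter_eval (BijGroup X) g m y \<in> set (word_path X g w x)"
    using hd_word_path_suffix_in_set[OF suffix_ConsD[OF mv]] hd_word_path_suffix_in_set[OF mv]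
    by (simp_all add: y_def)
  have yX: "y \<in> X"
    using word_path_subset[OF g x] y_on_path by blast
  show "letter_eval (BijGroup X) (twist_generator (BijGroup X) g l h) m y
      = letter_eval (BijGroup X) g m y"
  proof (cases "snd m = snd l")
    case False
    then show ?thesis by (simp add: letter_eval_twist_generator_other)
  next
    case True
    then consider "m = l" | "m = letter_inverse l"
      using letter_eq_or_inverse by blast
    then show ?thesis
    proof cases
      case 1
      then have "h (letter_eval (BijGroup X) g l y) = letter_eval (BijGroup X) g l y"
        using fixes_path my_on_path avoid(1) by (simp add: y_def)
      then show ?thesis
        using 1 letter_eval_twist_generator_apply[OF g h yX] by simp
    next
      case 2
      then have "h y = y"
        using fixes_path y_on_path avoid(2) by (simp add: y_def)
      then have "(inv\<^bsub>BijGroup X\<^esub> h) y = y"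
        using BijGroup_inv_apply_eq_iff[OF h yX yX] by simp
      then show ?thesis
        using 2 letter_eval_twist_generator_inverse_apply[OF g h yX] by simp
    qed
  qed
qed

lemma hd_word_path_neq:
  assumes "distinct (word_path X g w x)" "w \<noteq> []"
  shows "hd (word_path X g w x) \<noteq> x"
proof -
  obtain l v where "w = l # v"
    using assms(2) by (cases w) auto
  moreover have "x \<in> set (word_path X g v x)"
    by (metis last_in_set last_word_path word_path_not_Nil)
  ultimately show ?thesis
    using assms(1) by auto
qed

lemma distinct_word_path_Cons:
  assumes G: "subgroup G (BijGroup X)" and sep: "separates G X" and x: "x \<in> X"
    and reduced: "reduced_word (l # w)"
    and g: "range g \<subseteq> G" and distinct: "distinct (word_path X g w x)"
  obtains g' where "range g' \<subseteq> G" "distinct (word_path X g' (l # w) x)"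
proof -
  have GB: "G \<subseteq> Bij X"
    using subgroup.subset[OF G] by (simp add: carrier_BijGroup)
  have gB: "range g \<subseteq> Bij X"
    using g GB by blast
  define a where "a = letter_eval (BijGroup X) g l"
  define z where "z = hd (word_path X g w x)"
  have aB: "a \<in> Bij X"
    using letter_eval_BijGroup_closed[OF gB] by (simp add: a_def)
  have zX: "z \<in> X"
    using word_path_subset[OF gB x] unfolding z_def by (metis hd_in_set subsetD word_path_not_Nil)
  obtain h where hG: "h \<in> G" and h_fix: "\<forall>t \<in> set (word_path X g w x) - {a z}. h t = t"
    and h_escape: "h (a z) \<notin> set (word_path X g w x)"
    using separates_escape[OF G sep finite_set word_path_subset[OF gB x] Bij_apply_closed[OF aB zX]] .
  have hB: "h \<in> Bij X"
    using hG GB by blast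
  define g' where "g' = twist_generator (BijGroup X) g l h"
  have same_path: "word_path X g' w x = word_path X g w x"
    unfolding g'_def using h_fix
    by (intro word_path_twist_generator[OF gB hB x reduced distinct]) (simp add: a_def z_def)
  have "hd (word_path X g' (l # w) x) = h (a z)"
    using same_path letter_eval_twist_generator_apply[OF gB hB zX] by (simp add: g'_def a_def z_def)
  then have "distinct (word_path X g' (l # w) x)"
    using same_path distinct h_escape by simp
  moreover have "range g' \<subseteq> G"
    unfolding g'_def using twist_generator_in_subgroup[OF G g hG] .
  ultimately show ?thesis
    using that by blast
qed

lemma reduced_word_ConsD: "reduced_word (l # w) \<Longrightarrow> reduced_word w"
  by (cases w) auto

lemma exists_distinct_word_path:
  assumes G: "subgroup G (BijGroup X)" and sep: "separates G X" and x: "x \<in> X"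
  shows "reduced_word w \<Longrightarrow> \<exists>g. range g \<subseteq> G \<and> distinct (word_path X g w x)"
proof (induction w)
  case Nil
  show ?case
    using subgroup.one_closed[OF G] by auto
next
  case (Cons l w)
  then obtain g where "range g \<subseteq> G" "distinct (word_path X g w x)"
    using reduced_word_ConsD by blast
  then show ?case
    using distinct_word_path_Cons[OF G sep x Cons.prems] by metis
qed

theorem theorem1:
  fixes X :: "'a set" and G :: "('a \<Rightarrow> 'a) set"
  assumes "X \<noteq> {}"
    and "perm_group_on X G"
    and "separates G X"
  shows "\<forall>k \<ge> 1. \<forall>w. free_group_elem k w \<and> w \<noteq> [] \<longrightarrow>
           (\<exists>g. (\<forall>i < k. g i \<in> G) \<and>
                word_eval (BijGroup X) g w \<noteq> \<one>\<^bsub>BijGroup X\<^esub>)"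
proof (intro allI impI)
  fix k :: nat and w
  assume w: "free_group_elem k w \<and> w \<noteq> []"
  obtain x where x: "x \<in> X"
    using assms(1) by blast
  have G: "subgroup G (BijGroup X)"
    using assms(2) by (simp add: perm_group_on_def)
  obtain g where g: "range g \<subseteq> G" and distinct: "distinct (word_path X g w x)"
    using exists_distinct_word_path[OF G assms(3) x] w unfolding free_group_elem_def by blast
  have "range g \<subseteq> Bij X"
    using g subgroup.subset[OF G] by (auto simp: carrier_BijGroup)
  then have "word_eval (BijGroup X) g w x \<noteq> \<one>\<^bsub>BijGroup X\<^esub> x"
    using word_eval_apply[OF _ x] hd_word_path_neq[OF distinct] w x by (simp add: BijGroup_one_apply)
  then show "\<exists>g. (\<forall>i < k. g i \<in> G) \<and> word_eval (BijGroup X) g w \<noteq> \<one>\<^bsub>BijGroup X\<^esub>"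
    using g by (metis range_subsetD)
qed

end
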